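(* Let $\mathcal{S}=\{s_1,\dots,s_N\}$ be a finite state space, $\mathcal{A}$ a finite action space, $\gamma\in(0,1)$, and consider the real MDP $\langle\mathcal{S},\mathcal{A},\mathbb{P},R,\gamma\rangle$ and the DT MDP $\langle\mathcal{S},\mathcal{A},\mathbb{P}',R',\gamma\rangle$. Then for every deterministic policy $\pi:\mathcal{S}\to\mathcal{A}$, $$\|V^*_{\mathrm{real}}-V^\pi_{\mathrm{real}}\|\le\frac{2}{1-\gamma}\max_i\bar d(s_i,s_i)+\frac{1+\gamma}{1-\gamma}\|V^*_{\mathrm{DT}}-V^\pi_{\mathrm{DT}}\|.$$
   Context: $\mathbb{P}(\cdot|s,a),\mathbb{P}'(\cdot|s,a)$ are probability distributions on $\mathcal{S}$; $R,R':\mathcal{S}\times\mathcal{A}\to\mathbb{R}$. $V^\pi_{\mathrm{real}}$ is the unique solution of $V(s)=R(s,\pi(s))+\gamma\sum_{\tilde s}\mathbb{P}(\tilde s|s,\pi(s))V(\tilde s)$, $V^*_{\mathrm{real}}$ the unique solution of $V(s)=\max_a\{R(s,a)+\gamma\sum_{\tilde s}\mathbb{P}(\tilde s|s,a)V(\tilde s)\}$; $V^\pi_{\mathrm{DT}},V^*_{\mathrm{DT}}$ analogously with $\mathbb{P}',R'$. $\|V^*_{\mathrm{real}}-V^\pi_{\mathrm{real}}\|=\max_i\{V^*_{\mathrm{real}}(s_i)-V^\pi_{\mathrm{real}}(s_i)\}$, similarly for DT. For distributions $P,Q$ on $\mathcal{S}$ and a cost $d:\mathcal{S}\times\mathcal{S}\to[0,\infty)$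 (not required to vanish on the diagonal; first argument a real-MDP state, second a DT-MDP state), $W_1(P,Q;d)=\min_\Lambda\sum_{i,j}\lambda_{i,j}d(s_i,s_j)$ over nonnegative $N\times N$ matrices with row sums $P(s_i)$ and column sums $Q(s_j)$. Define $d_0\equiv0$, $d_n(s_i,s_j)=\max_a\{|R(s_i,a)-R'(s_j,a)|+\gamma W_1(\mathbb{P}(\cdot|s_i,a),\mathbb{P}'(\cdot|s_j,a);d_{n-1})\}$; the DT bisimulation metric $\bar d$ is the pointwise limit of the nondecreasing sequence $(d_n)$, and it satisfies $\bar d(s_i,s_j)=\max_a\{|R(s_i,a)-R'(s_j,a)|+\gamma W_1(\mathbb{P}(\cdot|s_i,a),\mathbb{P}'(\cdot|s_j,a);\bar d)\}$. *)

theory Defs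
  imports "HOL-Analysis.Analysis"
begin

text \<open>A transition kernel is P :: 's \<Rightarrow> 'a \<Rightarrow> 's \<Rightarrow> real, P s a s' = P(s' | s, a).\<close>

definition stochastic :: "('s::finite \<Rightarrow> 'a \<Rightarrow> 's \<Rightarrow> real) \<Rightarrow> bool" where
  "stochastic P \<longleftrightarrow> (\<forall>s a s'. P s a s' \<ge> 0) \<and> (\<forall>s a. (\<Sum>s'\<in>UNIV. P s a s') = 1)"

definition V_pi :: "('s::finite \<Rightarrow> 'a \<Rightarrow> 's \<Rightarrow> real) \<Rightarrow> ('s \<Rightarrow> 'a \<Rightarrow> real) \<Rightarrow> real
    \<Rightarrow> ('s \<Rightarrow> 'a) \<Rightarrow> 's \<Rightarrow> real" where
  "V_pi P R \<gamma> \<pi> = (THE V. \<forall>s. V s = R s (\<pi> s) + \<gamma> * (\<Sum>t\<in>UNIV. P s (\<pi> s) t * V t))"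

definition V_star :: "('s::finite \<Rightarrow> 'a::finite \<Rightarrow> 's \<Rightarrow> real) \<Rightarrow> ('s \<Rightarrow> 'a \<Rightarrow> real) \<Rightarrow> real
    \<Rightarrow> 's \<Rightarrow> real" where
  "V_star P R \<gamma> = (THE V. \<forall>s. V s = Max (range (\<lambda>a. R s a + \<gamma> * (\<Sum>t\<in>UNIV. P s a t * V t))))"

text \<open>The gap norm ||V1 - V2|| = max_i (V1 s_i - V2 s_i).\<close>
definition gap :: "('s::finite \<Rightarrow> real) \<Rightarrow> ('s \<Rightarrow> real) \<Rightarrow> real" where
  "gap V1 V2 = Max (range (\<lambda>s. V1 s - V2 s))"

text \<open>Wasserstein-1 distance with cost d: minimum over couplings (minimum is attained).\<close>
definition W1 :: "('s::finite \<Rightarrow> real) \<Rightarrow> ('s \<Rightarrow> real) \<Rightarrow> ('s \<Rightarrow> 's \<Rightarrow> real) \<Rightarrow> real" where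
  "W1 p q d = Inf {(\<Sum>i\<in>UNIV. \<Sum>j\<in>UNIV. L i j * d i j) | L.
      (\<forall>i j. L i j \<ge> 0) \<and> (\<forall>i. (\<Sum>j\<in>UNIV. L i j) = p i) \<and> (\<forall>j. (\<Sum>i\<in>UNIV. L i j) = q j)}"

fun d_iter :: "('s::finite \<Rightarrow> 'a::finite \<Rightarrow> 's \<Rightarrow> real) \<Rightarrow> ('s \<Rightarrow> 'a \<Rightarrow> real)
    \<Rightarrow> ('s \<Rightarrow> 'a \<Rightarrow> 's \<Rightarrow> real) \<Rightarrow> ('s \<Rightarrow> 'a \<Rightarrow> real) \<Rightarrow> real \<Rightarrow> nat \<Rightarrow> 's \<Rightarrow> 's \<Rightarrow> real" where
  "d_iter P R P' R' \<gamma> 0 = (\<lambda>_ _. 0)"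
| "d_iter P R P' R' \<gamma> (Suc n) = (\<lambda>si sj. Max (range (\<lambda>a.
      \<bar>R si a - R' sj a\<bar> + \<gamma> * W1 (P si a) (P' sj a) (d_iter P R P' R' \<gamma> n))))"

definition d_bar :: "('s::finite \<Rightarrow> 'a::finite \<Rightarrow> 's \<Rightarrow> real) \<Rightarrow> ('s \<Rightarrow> 'a \<Rightarrow> real)
    \<Rightarrow> ('s \<Rightarrow> 'a \<Rightarrow> 's \<Rightarrow> real) \<Rightarrow> ('s \<Rightarrow> 'a \<Rightarrow> real) \<Rightarrow> real \<Rightarrow> 's \<Rightarrow> 's \<Rightarrow> real" where
  "d_bar P R P' R' \<gamma> si sj = lim (\<lambda>n. d_iter P R P' R' \<gamma> n si sj)"

end

theory Submission
  imports Defs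
begin

(* Write Q^V(s,a) = R(s,a) + gamma * E_{P(s,a)} V (q_value) and Q* = Q^{V*}. For every state s,
     V*_real(s) - V^pi_real(s) = [V*_real(s) - V*_DT(s)] + [V*_DT(s) - Q*_DT(s,pi s)]
                                + [Q*_DT(s,pi s) - Q*_real(s,pi s)] + [Q*_real(s,pi s) - V^pi_real(s)].
   The first and third brackets are at most D = max_s dbar(s,s); the second is at most the DT gap G,
   because V^pi_DT(s) = Q^{V^pi_DT}_DT(s,pi s) <= Q*_DT(s,pi s); the last is gamma times an average
   of V*_real - V^pi_real, hence at most gamma times the real gap delta. So delta <= 2 D + G + gamma delta,
   and G >= 0 gives the claim (even with G / (1 - gamma) in place of (1 + gamma) G / (1 - gamma)).
   The bisimulation bound |Q*_real(s,a) - Q*_DT(s',a)| <= dbar(s,s') is the limit of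
   |V*_real(s) - V*_DT(s')| <= d_n(s,s') + gamma^n K, which follows by induction on n from weak
   Kantorovich duality for W_1. *)

definition prob_dist :: "('s::finite \<Rightarrow> real) \<Rightarrow> bool" where
  "prob_dist p \<longleftrightarrow> (\<forall>i. 0 \<le> p i) \<and> (\<Sum>i\<in>UNIV. p i) = 1"

lemma Max_range_mono:
  fixes f g :: "'a::finite \<Rightarrow> 'b::linorder"
  assumes "\<And>x. f x \<le> g x"
  shows "Max (range f) \<le> Max (range g)"
proof -
  have "g x \<le> Max (range g)" for x by simp
  then have "f x \<le> Max (range g)" for x using assms order_trans by blast
  then show ?thesis by simp
qed

lemma abs_Max_range_diff_le:
  fixes f g :: "'a::finite \<Rightarrow> real"
  assumes "\<And>x. \<bar>f x - g x\<bar> \<le> c"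
  shows "\<bar>Max (range f) - Max (range g)\<bar> \<le> c"
proof -
  have "f x \<le> g x + c" "g x \<le> f x + c" for x
    using assms[of x] by (simp_all add: abs_le_iff)
  then have "Max (range f) \<le> Max (range (\<lambda>x. g x + c))" "Max (range g) \<le> Max (range (\<lambda>x. f x + c))"
    by (blast intro: Max_range_mono)+
  moreover have shift: "Max (range (\<lambda>x. h x + c)) = Max (range h) + c" for h :: "'a \<Rightarrow> real"
    by (rule Max_add_commute) auto
  ultimately show ?thesis unfolding shift abs_le_iff by linarith
qed

lemma prob_dist_stochastic: "stochastic P \<Longrightarrow> prob_dist (P s a)"
  by (simp add: stochastic_def prob_dist_def)

lemma prob_dist_sum_const:
  "prob_dist p \<Longrightarrow> (\<Sum>i\<in>UNIV. p i * c) = c"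
  by (simp add: prob_dist_def flip: sum_distrib_right)

lemma prob_dist_sum_le:
  assumes "prob_dist p" "\<And>i. x i \<le> c"
  shows "(\<Sum>i\<in>UNIV. p i * x i) \<le> c"
proof -
  have "(\<Sum>i\<in>UNIV. p i * x i) \<le> (\<Sum>i\<in>UNIV. p i * c)"
    using assms by (intro sum_mono) (simp add: prob_dist_def mult_left_mono)
  then show ?thesis using prob_dist_sum_const[OF assms(1)] by simp
qed

lemma prob_dist_sum_ge:
  assumes "prob_dist p" "\<And>i. c \<le> x i"
  shows "c \<le> (\<Sum>i\<in>UNIV. p i * x i)"
proof -
  have "(\<Sum>i\<in>UNIV. p i * c) \<le> (\<Sum>i\<in>UNIV. p i * x i)"
    using assms by (intro sum_mono) (simp add: prob_dist_def mult_left_mono)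
  then show ?thesis using prob_dist_sum_const[OF assms(1)] by simp
qed

lemma prob_dist_abs_sum_le:
  assumes "prob_dist p" "\<And>i. \<bar>x i\<bar> \<le> c"
  shows "\<bar>\<Sum>i\<in>UNIV. p i * x i\<bar> \<le> c"
proof -
  have "x i \<le> c" "-c \<le> x i" for i
    using assms(2)[of i] by (simp_all add: abs_le_iff)
  then have "(\<Sum>i\<in>UNIV. p i * x i) \<le> c" "-c \<le> (\<Sum>i\<in>UNIV. p i * x i)"
    by (blast intro: prob_dist_sum_le[OF assms(1)] prob_dist_sum_ge[OF assms(1)])+
  then show ?thesis by (simp add: abs_le_iff)
qed

lemma le_of_le_plus_power:
  fixes x y K \<gamma> :: real
  assumes "0 \<le> \<gamma>" "\<gamma> < 1" "\<And>n. x \<le> y + \<gamma> ^ n * K"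
  shows "x \<le> y"
proof (rule LIMSEQ_le_const)
  have "(\<lambda>n. \<gamma> ^ n) \<longlonglongrightarrow> 0" by (rule LIMSEQ_power_zero) (use assms(1,2) in simp)
  then have "(\<lambda>n. y + \<gamma> ^ n * K) \<longlonglongrightarrow> y + 0"
    by (rule tendsto_add[OF tendsto_const tendsto_mult_left_zero])
  then show "(\<lambda>n. y + \<gamma> ^ n * K) \<longlonglongrightarrow> y" by simp
qed (use assms(3) in blast)

section \<open>Fixed points of sup-norm contractions\<close>

lemma sup_contraction_fixpoint_unique:
  fixes T :: "('s::finite \<Rightarrow> real) \<Rightarrow> 's \<Rightarrow> real"
  assumes "g < 1"
    and contr: "\<And>V W c s. (\<And>t. \<bar>V t - W t\<bar> \<le> c) \<Longrightarrow> \<bar>T V s - T W s\<bar> \<le> g * c"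
    and "T V = V" "T W = W"
  shows "V = W"
proof -
  define m where "m = Max (range (\<lambda>t. \<bar>V t - W t\<bar>))"
  have le_m: "\<bar>V t - W t\<bar> \<le> m" for t by (simp add: m_def)
  have "\<bar>T V s - T W s\<bar> \<le> g * m" for s
    by (rule contr) (rule le_m)
  then have "\<bar>V s - W s\<bar> \<le> g * m" for s
    using \<open>T V = V\<close> \<open>T W = W\<close> by simp
  then have "m \<le> g * m"
    unfolding m_def by (subst Max_le_iff) auto
  then have "m * (1 - g) \<le> 0" by (simp add: algebra_simps)
  then have "m \<le> 0" using \<open>g < 1\<close> by (simp add: mult_le_0_iff)
  then have "\<bar>V t - W t\<bar> \<le> 0" for t using le_m[of t] by linarith
  then show "V = W" by (intro ext) simp
qed

lemma sup_contraction_iterates_converge: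
  fixes T :: "('s::finite \<Rightarrow> real) \<Rightarrow> 's \<Rightarrow> real"
  assumes "0 \<le> g" "g < 1"
    and contr: "\<And>V W c s. (\<And>t. \<bar>V t - W t\<bar> \<le> c) \<Longrightarrow> \<bar>T V s - T W s\<bar> \<le> g * c"
  shows "\<exists>L. \<forall>s. (\<lambda>n. (T ^^ n) V\<^sub>0 s) \<longlonglongrightarrow> L s"
proof -
  define V where "V n = (T ^^ n) V\<^sub>0" for n
  define M where "M = Max (range (\<lambda>t. \<bar>V 1 t - V 0 t\<bar>))"
  have step: "\<bar>V (Suc k) s - V k s\<bar> \<le> g ^ k * M" for k s
  proof (induction k arbitrary: s)
    case 0
    show ?case by (simp add: M_def)
  next
    case (Suc k)
    have "\<bar>V (Suc (Suc k)) s - V (Suc k) s\<bar> = \<bar>T (V (Suc k)) s - T (V k) s\<bar>"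
      by (simp add: V_def)
    also have "\<dots> \<le> g * (g ^ k * M)" by (rule contr) (rule Suc.IH)
    finally show ?case by simp
  qed
  define L where "L s = V 0 s + (\<Sum>k. V (Suc k) s - V k s)" for s
  have "(\<lambda>n. V n s) \<longlonglongrightarrow> L s" for s
  proof -
    have "summable (\<lambda>k. V (Suc k) s - V k s)"
    proof (rule summable_comparison_test')
      show "summable (\<lambda>k. g ^ k * M)" using assms(1,2) by (intro summable_mult2 summable_geometric) simp
    qed (use step in simp)
    then have "(\<lambda>n. \<Sum>k<n. V (Suc k) s - V k s) \<longlonglongrightarrow> (\<Sum>k. V (Suc k) s - V k s)"
      by (rule summable_LIMSEQ)
    moreover have "(\<Sum>k<n. V (Suc k) s - V k s) = V n s - V 0 s" for n
      by (rule sum_lessThan_telescope)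
    ultimately have "(\<lambda>n. V 0 s + (V n s - V 0 s)) \<longlonglongrightarrow> V 0 s + (\<Sum>k. V (Suc k) s - V k s)"
      by (intro tendsto_add tendsto_const) simp
    then show ?thesis by (simp add: L_def)
  qed
  then show ?thesis unfolding V_def by blast
qed

lemma sup_contraction_has_fixpoint:
  fixes T :: "('s::finite \<Rightarrow> real) \<Rightarrow> 's \<Rightarrow> real"
  assumes "0 \<le> g" "g < 1"
    and contr: "\<And>V W c s. (\<And>t. \<bar>V t - W t\<bar> \<le> c) \<Longrightarrow> \<bar>T V s - T W s\<bar> \<le> g * c"
  shows "\<exists>L. T L = L"
proof -
  define V where "V n = (T ^^ n) (\<lambda>_. 0)" for n
  obtain L where conv: "\<And>s. (\<lambda>n. V n s) \<longlonglongrightarrow> L s"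
    using sup_contraction_iterates_converge[of g T, OF assms(1,2) contr] unfolding V_def by blast
  have "T L s = L s" for s
  proof -
    have "(\<lambda>n. \<Sum>t\<in>UNIV. \<bar>V n t - L t\<bar>) \<longlonglongrightarrow> 0"
      by (intro tendsto_null_sum tendsto_rabs_zero) (use conv LIM_zero in blast)
    then have dist_to_0: "(\<lambda>n. g * (\<Sum>t\<in>UNIV. \<bar>V n t - L t\<bar>)) \<longlonglongrightarrow> 0"
      by (rule tendsto_mult_right_zero)
    have "\<bar>T (V n) s - T L s\<bar> \<le> g * (\<Sum>t\<in>UNIV. \<bar>V n t - L t\<bar>)" for n
      by (rule contr) (rule member_le_sum; simp)
    then have "(\<lambda>n. T (V n) s - T L s) \<longlonglongrightarrow> 0"
      by (intro Lim_null_comparison[OF _ dist_to_0] always_eventually) simp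
    then have "(\<lambda>n. V (Suc n) s) \<longlonglongrightarrow> T L s" by (simp add: V_def LIM_zero_cancel)
    then show ?thesis using LIMSEQ_Suc[OF conv] by (rule LIMSEQ_unique)
  qed
  then show ?thesis by blast
qed

lemma sup_contraction_ex1_fixpoint:
  fixes T :: "('s::finite \<Rightarrow> real) \<Rightarrow> 's \<Rightarrow> real"
  assumes "0 \<le> g" "g < 1"
    and "\<And>V W c s. (\<And>t. \<bar>V t - W t\<bar> \<le> c) \<Longrightarrow> \<bar>T V s - T W s\<bar> \<le> g * c"
  shows "\<exists>!V. \<forall>s. V s = T V s"
proof -
  obtain L where "T L = L" using sup_contraction_has_fixpoint[of g T, OF assms] by blast
  moreover have "V = L" if "T V = V" for V
    using sup_contraction_fixpoint_unique[of g T, OF assms(2,3) that \<open>T L = L\<close>] .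
  ultimately show ?thesis by (metis fun_eq_iff)
qed

section \<open>Bellman equations\<close>

definition q_value :: "('s::finite \<Rightarrow> 'a \<Rightarrow> 's \<Rightarrow> real) \<Rightarrow> ('s \<Rightarrow> 'a \<Rightarrow> real) \<Rightarrow> real
    \<Rightarrow> ('s \<Rightarrow> real) \<Rightarrow> 's \<Rightarrow> 'a \<Rightarrow> real" where
  "q_value P R \<gamma> V s a = R s a + \<gamma> * (\<Sum>t\<in>UNIV. P s a t * V t)"

lemma q_value_diff:
  "q_value P R \<gamma> V s a - q_value P R \<gamma> W s a = \<gamma> * (\<Sum>t\<in>UNIV. P s a t * (V t - W t))"
  by (simp add: q_value_def algebra_simps sum_subtractf)

lemma abs_q_value_diff_le:
  assumes "stochastic P" "0 \<le> \<gamma>" "\<And>t. \<bar>V t - W t\<bar> \<le> c"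
  shows "\<bar>q_value P R \<gamma> V s a - q_value P R \<gamma> W s a\<bar> \<le> \<gamma> * c"
  unfolding q_value_diff abs_mult using assms
  by (simp add: mult_left_mono prob_dist_abs_sum_le prob_dist_stochastic)

lemma q_value_mono:
  assumes "stochastic P" "0 \<le> \<gamma>" "\<And>t. V t \<le> W t"
  shows "q_value P R \<gamma> V s a \<le> q_value P R \<gamma> W s a"
proof -
  have "0 \<le> (\<Sum>t\<in>UNIV. P s a t * (W t - V t))"
    using assms by (intro prob_dist_sum_ge prob_dist_stochastic) auto
  then have "0 \<le> q_value P R \<gamma> W s a - q_value P R \<gamma> V s a"
    unfolding q_value_diff using assms(2) by simp
  then show ?thesis by simp
qed

lemma V_star_eq:
  fixes P :: "'s::finite \<Rightarrow> 'a::finite \<Rightarrow> 's \<Rightarrow> real"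
  assumes "stochastic P" "0 \<le> \<gamma>" "\<gamma> < 1"
  shows "V_star P R \<gamma> s = Max (range (q_value P R \<gamma> (V_star P R \<gamma>) s))"
proof -
  have "\<exists>!V. \<forall>s. V s = Max (range (q_value P R \<gamma> V s))"
  proof (rule sup_contraction_ex1_fixpoint[OF assms(2,3)])
    fix V W :: "'s \<Rightarrow> real" and c s
    assume "\<And>t. \<bar>V t - W t\<bar> \<le> c"
    then show "\<bar>Max (range (q_value P R \<gamma> V s)) - Max (range (q_value P R \<gamma> W s))\<bar> \<le> \<gamma> * c"
      by (intro abs_Max_range_diff_le abs_q_value_diff_le assms(1,2))
  qed
  from theI'[OF this] show ?thesis unfolding V_star_def q_value_def by blast
qed

lemma V_pi_eq:
  assumes "stochastic P" "0 \<le> \<gamma>" "\<gamma> < 1"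
  shows "V_pi P R \<gamma> \<pi> s = q_value P R \<gamma> (V_pi P R \<gamma> \<pi>) s (\<pi> s)"
proof -
  have "\<exists>!V. \<forall>s. V s = q_value P R \<gamma> V s (\<pi> s)"
    by (rule sup_contraction_ex1_fixpoint[OF assms(2,3)]) (rule abs_q_value_diff_le[OF assms(1,2)])
  from theI'[OF this] show ?thesis unfolding V_pi_def q_value_def by blast
qed

lemma q_value_V_star_le:
  assumes "stochastic P" "0 \<le> \<gamma>" "\<gamma> < 1"
  shows "q_value P R \<gamma> (V_star P R \<gamma>) s a \<le> V_star P R \<gamma> s"
  using V_star_eq[OF assms, of R s] by simp

lemma V_pi_le_V_star:
  assumes "stochastic P" "0 \<le> \<gamma>" "\<gamma> < 1"
  shows "V_pi P R \<gamma> \<pi> s \<le> V_star P R \<gamma> s"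
proof -
  define x where "x t = V_star P R \<gamma> t - V_pi P R \<gamma> \<pi> t" for t
  have "Min (range x) \<in> range x" by (rule Min_in) auto
  then obtain s\<^sub>0 where "x s\<^sub>0 = Min (range x)" by (metis rangeE)
  then have min: "x s\<^sub>0 \<le> x t" for t by simp
  have "x s\<^sub>0 \<le> (\<Sum>t\<in>UNIV. P s\<^sub>0 (\<pi> s\<^sub>0) t * x t)"
    by (rule prob_dist_sum_ge[OF prob_dist_stochastic[OF assms(1)]]) (rule min)
  then have "\<gamma> * x s\<^sub>0 \<le> \<gamma> * (\<Sum>t\<in>UNIV. P s\<^sub>0 (\<pi> s\<^sub>0) t * x t)"
    by (rule mult_left_mono) (rule assms(2))
  also have "\<dots> = q_value P R \<gamma> (V_star P R \<gamma>) s\<^sub>0 (\<pi> s\<^sub>0) - q_value P R \<gamma> (V_pi P R \<gamma> \<pi>) s\<^sub>0 (\<pi> s\<^sub>0)"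
    unfolding x_def by (rule q_value_diff[symmetric])
  also have "\<dots> \<le> x s\<^sub>0"
    unfolding x_def using q_value_V_star_le[OF assms, of R s\<^sub>0 "\<pi> s\<^sub>0"] V_pi_eq[OF assms, of R \<pi> s\<^sub>0]
    by linarith
  finally have "(1 - \<gamma>) * x s\<^sub>0 \<ge> 0" by (simp add: algebra_simps)
  then have "0 \<le> x s\<^sub>0" using \<open>\<gamma> < 1\<close> by (simp add: zero_le_mult_iff)
  then show ?thesis using min[of s] by (simp add: x_def)
qed

lemma V_pi_le_q_value_V_star:
  assumes "stochastic P" "0 \<le> \<gamma>" "\<gamma> < 1"
  shows "V_pi P R \<gamma> \<pi> s \<le> q_value P R \<gamma> (V_star P R \<gamma>) s (\<pi> s)"
  by (subst V_pi_eq[OF assms]) (intro q_value_mono V_pi_le_V_star assms)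

lemma diff_le_gap: "V s - W s \<le> gap V W"
  by (simp add: gap_def)

lemma gap_le_iff: "gap V W \<le> c \<longleftrightarrow> (\<forall>s. V s - W s \<le> c)"
  by (simp add: gap_def)

lemma gap_nonneg:
  assumes "\<And>s. W s \<le> V s"
  shows "0 \<le> gap V W"
  using diff_le_gap[of V undefined W] assms[of undefined] by linarith

lemma q_value_V_pi_diff_le_gap:
  assumes "stochastic P" "0 \<le> \<gamma>" "\<gamma> < 1"
  shows "q_value P R \<gamma> V s (\<pi> s) - V_pi P R \<gamma> \<pi> s \<le> \<gamma> * gap V (V_pi P R \<gamma> \<pi>)"
proof -
  have "q_value P R \<gamma> V s (\<pi> s) - V_pi P R \<gamma> \<pi> s
      = q_value P R \<gamma> V s (\<pi> s) - q_value P R \<gamma> (V_pi P R \<gamma> \<pi>) s (\<pi> s)"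
    using V_pi_eq[OF assms, of R \<pi> s] by simp
  also have "\<dots> = \<gamma> * (\<Sum>t\<in>UNIV. P s (\<pi> s) t * (V t - V_pi P R \<gamma> \<pi> t))"
    by (rule q_value_diff)
  also have "\<dots> \<le> \<gamma> * gap V (V_pi P R \<gamma> \<pi>)"
    using assms by (intro mult_left_mono prob_dist_sum_le prob_dist_stochastic diff_le_gap)
  finally show ?thesis .
qed

section \<open>The Wasserstein distance\<close>

definition couplings :: "('s::finite \<Rightarrow> real) \<Rightarrow> ('s \<Rightarrow> real) \<Rightarrow> ('s \<Rightarrow> 's \<Rightarrow> real) set" where
  "couplings p q = {L. (\<forall>i j. 0 \<le> L i j) \<and> (\<forall>i. (\<Sum>j\<in>UNIV. L i j) = p i)
                        \<and> (\<forall>j. (\<Sum>i\<in>UNIV. L i j) = q j)}"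

lemma W1_eq_INF_couplings:
  "W1 p q d = (INF L\<in>couplings p q. \<Sum>i\<in>UNIV. \<Sum>j\<in>UNIV. L i j * d i j)"
  unfolding W1_def couplings_def by (rule arg_cong[where f = Inf]) auto

lemma product_coupling:
  "prob_dist p \<Longrightarrow> prob_dist q \<Longrightarrow> (\<lambda>i j. p i * q j) \<in> couplings p q"
  by (simp add: prob_dist_def couplings_def flip: sum_distrib_left sum_distrib_right)

lemma coupling_costs_bdd_below:
  assumes "\<And>i j. 0 \<le> d i j"
  shows "bdd_below ((\<lambda>L. \<Sum>i\<in>UNIV. \<Sum>j\<in>UNIV. L i j * d i j) ` couplings p q)"
  using assms by (intro bdd_belowI[of _ 0]) (auto simp: couplings_def intro!: sum_nonneg)

lemma W1_ge_dual:
  assumes "prob_dist p" "prob_dist q" "\<And>i j. u i + v j \<le> d i j"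
  shows "(\<Sum>i\<in>UNIV. p i * u i) + (\<Sum>j\<in>UNIV. q j * v j) \<le> W1 p q d"
  unfolding W1_eq_INF_couplings
proof (rule cINF_greatest)
  show "couplings p q \<noteq> {}" using product_coupling[OF assms(1,2)] by blast
  fix L assume L: "L \<in> couplings p q"
  then have "(\<Sum>i\<in>UNIV. p i * u i) + (\<Sum>j\<in>UNIV. q j * v j)
      = (\<Sum>i\<in>UNIV. \<Sum>j\<in>UNIV. L i j * u i) + (\<Sum>j\<in>UNIV. \<Sum>i\<in>UNIV. L i j * v j)"
    by (simp add: couplings_def flip: sum_distrib_right)
  also have "\<dots> = (\<Sum>i\<in>UNIV. \<Sum>j\<in>UNIV. L i j * (u i + v j))"
    by (subst sum.swap[of _ UNIV]) (simp add: distrib_left sum.distrib)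
  also have "\<dots> \<le> (\<Sum>i\<in>UNIV. \<Sum>j\<in>UNIV. L i j * d i j)"
    using L assms(3) by (intro sum_mono mult_left_mono) (auto simp: couplings_def)
  finally show "(\<Sum>i\<in>UNIV. p i * u i) + (\<Sum>j\<in>UNIV. q j * v j) \<le> (\<Sum>i\<in>UNIV. \<Sum>j\<in>UNIV. L i j * d i j)" .
qed

lemma W1_nonneg: "prob_dist p \<Longrightarrow> prob_dist q \<Longrightarrow> (\<And>i j. 0 \<le> d i j) \<Longrightarrow> 0 \<le> W1 p q d"
  using W1_ge_dual[of p q "\<lambda>_. 0" "\<lambda>_. 0" d] by simp

lemma W1_mono:
  assumes "prob_dist p" "prob_dist q" "\<And>i j. 0 \<le> d i j" "\<And>i j. d i j \<le> d' i j"
  shows "W1 p q d \<le> W1 p q d'"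
  unfolding W1_eq_INF_couplings
proof (rule cINF_mono)
  show "couplings p q \<noteq> {}" using product_coupling[OF assms(1,2)] by blast
  show "bdd_below ((\<lambda>L. \<Sum>i\<in>UNIV. \<Sum>j\<in>UNIV. L i j * d i j) ` couplings p q)"
    using assms(3) by (rule coupling_costs_bdd_below)
  fix L assume L: "L \<in> couplings p q"
  then have "(\<Sum>i\<in>UNIV. \<Sum>j\<in>UNIV. L i j * d i j) \<le> (\<Sum>i\<in>UNIV. \<Sum>j\<in>UNIV. L i j * d' i j)"
    using assms(4) by (intro sum_mono mult_left_mono) (auto simp: couplings_def)
  then show "\<exists>L'\<in>couplings p q. (\<Sum>i\<in>UNIV. \<Sum>j\<in>UNIV. L' i j * d i j) \<le> (\<Sum>i\<in>UNIV. \<Sum>j\<in>UNIV. L i j * d' i j)"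
    using L by blast
qed

lemma W1_le:
  assumes "prob_dist p" "prob_dist q" "\<And>i j. 0 \<le> d i j" "\<And>i j. d i j \<le> K"
  shows "W1 p q d \<le> K"
proof -
  have "W1 p q d \<le> (\<Sum>i\<in>UNIV. \<Sum>j\<in>UNIV. p i * q j * d i j)"
    unfolding W1_eq_INF_couplings
    by (rule cINF_lower[OF coupling_costs_bdd_below[OF assms(3)] product_coupling[OF assms(1,2)]])
  also have "\<dots> = (\<Sum>i\<in>UNIV. p i * (\<Sum>j\<in>UNIV. q j * d i j))"
    by (simp add: sum_distrib_left mult.assoc)
  also have "\<dots> \<le> K"
    using assms by (intro prob_dist_sum_le prob_dist_sum_le) auto
  finally show ?thesis .
qed

lemma abs_sum_diff_le_W1:
  assumes "prob_dist p" "prob_dist q" "\<And>i j. \<bar>f i - g j\<bar> \<le> d i j + c"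
  shows "\<bar>(\<Sum>i\<in>UNIV. p i * f i) - (\<Sum>j\<in>UNIV. q j * g j)\<bar> \<le> W1 p q d + c"
proof -
  have "(f i - c) + - g j \<le> d i j" "(- f i - c) + g j \<le> d i j" for i j
    using assms(3)[of i j] by (simp_all add: abs_le_iff)
  then have "(\<Sum>i\<in>UNIV. p i * (f i - c)) + (\<Sum>j\<in>UNIV. q j * - g j) \<le> W1 p q d"
    and "(\<Sum>i\<in>UNIV. p i * (- f i - c)) + (\<Sum>j\<in>UNIV. q j * g j) \<le> W1 p q d"
    using W1_ge_dual[OF assms(1,2), of "\<lambda>i. f i - c" "\<lambda>j. - g j"]
      W1_ge_dual[OF assms(1,2), of "\<lambda>i. - f i - c" g] by blast+
  moreover have "(\<Sum>i\<in>UNIV. p i * (f i - c)) = (\<Sum>i\<in>UNIV. p i * f i) - c"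
    "(\<Sum>i\<in>UNIV. p i * (- f i - c)) = - (\<Sum>i\<in>UNIV. p i * f i) - c"
    using prob_dist_sum_const[OF assms(1), of c]
    by (simp_all add: right_diff_distrib sum_subtractf sum_negf)
  ultimately show ?thesis by (simp add: sum_negf abs_le_iff)
qed

section \<open>The bisimulation metric\<close>

lemma d_iter_Suc_eq:
  "d_iter P R P' R' \<gamma> (Suc n) i j
    = Max (range (\<lambda>a. \<bar>R i a - R' j a\<bar> + \<gamma> * W1 (P i a) (P' j a) (d_iter P R P' R' \<gamma> n)))"
  by simp

lemma d_iter_Suc_ge:
  "\<bar>R i a - R' j a\<bar> + \<gamma> * W1 (P i a) (P' j a) (d_iter P R P' R' \<gamma> n) \<le> d_iter P R P' R' \<gamma> (Suc n) i j"
  unfolding d_iter_Suc_eq by (rule Max_ge) auto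

lemma d_iter_nonneg:
  fixes P P' :: "'s::finite \<Rightarrow> 'a::finite \<Rightarrow> 's \<Rightarrow> real"
  assumes "stochastic P" "stochastic P'" "0 \<le> \<gamma>"
  shows "0 \<le> d_iter P R P' R' \<gamma> n i j"
proof (induction n arbitrary: i j)
  case 0
  show ?case by simp
next
  case (Suc n)
  have "0 \<le> W1 (P i a) (P' j a) (d_iter P R P' R' \<gamma> n)" for a
    using assms(1,2) Suc.IH by (intro W1_nonneg prob_dist_stochastic)
  then have "0 \<le> \<gamma> * W1 (P i undefined) (P' j undefined) (d_iter P R P' R' \<gamma> n)"
    using assms(3) by simp
  then show ?case using d_iter_Suc_ge[of R i undefined R' j \<gamma> P P' n] by linarith
qed

lemma d_iter_Suc_mono:
  fixes P P' :: "'s::finite \<Rightarrow> 'a::finite \<Rightarrow> 's \<Rightarrow> real"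
  assumes "stochastic P" "stochastic P'" "0 \<le> \<gamma>"
    and "\<And>i j. d_iter P R P' R' \<gamma> m i j \<le> d_iter P R P' R' \<gamma> n i j"
  shows "d_iter P R P' R' \<gamma> (Suc m) i j \<le> d_iter P R P' R' \<gamma> (Suc n) i j"
proof -
  have W1_le: "W1 (P i a) (P' j a) (d_iter P R P' R' \<gamma> m) \<le> W1 (P i a) (P' j a) (d_iter P R P' R' \<gamma> n)"
    for a using assms by (intro W1_mono prob_dist_stochastic d_iter_nonneg)
  show ?thesis
    unfolding d_iter_Suc_eq
    by (rule Max_range_mono, rule add_left_mono, rule mult_left_mono[OF W1_le assms(3)])
qed

lemma incseq_d_iter:
  fixes P P' :: "'s::finite \<Rightarrow> 'a::finite \<Rightarrow> 's \<Rightarrow> real"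
  assumes "stochastic P" "stochastic P'" "0 \<le> \<gamma>"
  shows "incseq (\<lambda>n. d_iter P R P' R' \<gamma> n i j)"
proof -
  have "d_iter P R P' R' \<gamma> n i j \<le> d_iter P R P' R' \<gamma> (Suc n) i j" for n
  proof (induction n arbitrary: i j)
    case 0
    show ?case unfolding d_iter.simps(1) by (rule d_iter_nonneg[OF assms])
  next
    case (Suc n)
    show ?case by (rule d_iter_Suc_mono[OF assms Suc.IH])
  qed
  then show ?thesis by (rule incseq_SucI)
qed

lemma d_iter_le_bound:
  fixes P P' :: "'s::finite \<Rightarrow> 'a::finite \<Rightarrow> 's \<Rightarrow> real"
  assumes "stochastic P" "stochastic P'" "0 \<le> \<gamma>" "\<gamma> < 1"
    and M: "\<And>i j a. \<bar>R i a - R' j a\<bar> \<le> M"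
  shows "d_iter P R P' R' \<gamma> n i j \<le> M / (1 - \<gamma>)"
proof (induction n arbitrary: i j)
  case 0
  show ?case using M[of undefined undefined undefined] \<open>\<gamma> < 1\<close> by simp
next
  case (Suc n)
  have "\<bar>R i a - R' j a\<bar> + \<gamma> * W1 (P i a) (P' j a) (d_iter P R P' R' \<gamma> n) \<le> M / (1 - \<gamma>)" for a
  proof -
    have "W1 (P i a) (P' j a) (d_iter P R P' R' \<gamma> n) \<le> M / (1 - \<gamma>)"
      using assms(1-3) Suc.IH by (intro W1_le prob_dist_stochastic d_iter_nonneg)
    then have "\<bar>R i a - R' j a\<bar> + \<gamma> * W1 (P i a) (P' j a) (d_iter P R P' R' \<gamma> n)
        \<le> M + \<gamma> * (M / (1 - \<gamma>))"
      using M[of i a j] assms(3) by (intro add_mono mult_left_mono)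
    also have "\<dots> = M / (1 - \<gamma>)" using \<open>\<gamma> < 1\<close> by (simp add: field_simps)
    finally show ?thesis .
  qed
  then show ?case unfolding d_iter_Suc_eq by simp
qed

lemma d_iter_le_d_bar:
  fixes P P' :: "'s::finite \<Rightarrow> 'a::finite \<Rightarrow> 's \<Rightarrow> real"
  assumes "stochastic P" "stochastic P'" "0 \<le> \<gamma>" "\<gamma> < 1"
  shows "d_iter P R P' R' \<gamma> n i j \<le> d_bar P R P' R' \<gamma> i j"
proof -
  define M where "M = Max (range (\<lambda>(i, j, a). \<bar>R i a - R' j a\<bar>))"
  have M: "\<bar>R i a - R' j a\<bar> \<le> M" for i j a
    unfolding M_def by (rule Max_ge) (auto intro: image_eqI[where x = "(i, j, a)"])
  have "bdd_above (range (\<lambda>n. d_iter P R P' R' \<gamma> n i j))"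
    by (rule bdd_aboveI2[where M = "M / (1 - \<gamma>)"]) (rule d_iter_le_bound[OF assms M])
  then have lim: "(\<lambda>n. d_iter P R P' R' \<gamma> n i j) \<longlonglongrightarrow> (SUP n. d_iter P R P' R' \<gamma> n i j)"
    by (rule LIMSEQ_incseq_SUP) (rule incseq_d_iter[OF assms(1-3)])
  then have "d_bar P R P' R' \<gamma> i j = (SUP n. d_iter P R P' R' \<gamma> n i j)"
    unfolding d_bar_def by (rule limI)
  then show ?thesis using incseq_le[OF incseq_d_iter[OF assms(1-3)] lim] by simp
qed

lemma abs_q_value_diff_le_W1:
  assumes "stochastic P" "stochastic P'" "0 \<le> \<gamma>" "\<And>i j. \<bar>V i - W j\<bar> \<le> d i j + c"
  shows "\<bar>q_value P R \<gamma> V i a - q_value P' R' \<gamma> W j a\<bar>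
    \<le> \<bar>R i a - R' j a\<bar> + \<gamma> * W1 (P i a) (P' j a) d + \<gamma> * c"
proof -
  define X where "X = (\<Sum>t\<in>UNIV. P i a t * V t)"
  define Y where "Y = (\<Sum>t\<in>UNIV. P' j a t * W t)"
  have "\<bar>X - Y\<bar> \<le> W1 (P i a) (P' j a) d + c"
    unfolding X_def Y_def using assms(1,2,4) by (intro abs_sum_diff_le_W1 prob_dist_stochastic)
  then have "\<gamma> * \<bar>X - Y\<bar> \<le> \<gamma> * (W1 (P i a) (P' j a) d + c)"
    using assms(3) by (rule mult_left_mono)
  then have "\<bar>\<gamma> * X - \<gamma> * Y\<bar> \<le> \<gamma> * W1 (P i a) (P' j a) d + \<gamma> * c"
    using assms(3) by (simp add: abs_mult distrib_left flip: right_diff_distrib)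
  moreover have "\<bar>q_value P R \<gamma> V i a - q_value P' R' \<gamma> W j a\<bar> \<le> \<bar>R i a - R' j a\<bar> + \<bar>\<gamma> * X - \<gamma> * Y\<bar>"
    unfolding q_value_def X_def Y_def by linarith
  ultimately show ?thesis by linarith
qed

lemma abs_V_star_diff_le_d_iter:
  fixes P P' :: "'s::finite \<Rightarrow> 'a::finite \<Rightarrow> 's \<Rightarrow> real"
  assumes "stochastic P" "stochastic P'" "0 \<le> \<gamma>" "\<gamma> < 1"
    and K: "\<And>i j. \<bar>V_star P R \<gamma> i - V_star P' R' \<gamma> j\<bar> \<le> K"
  shows "\<bar>V_star P R \<gamma> i - V_star P' R' \<gamma> j\<bar> \<le> d_iter P R P' R' \<gamma> n i j + \<gamma> ^ n * K"
proof (induction n arbitrary: i j)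
  case 0
  show ?case using K by simp
next
  case (Suc n)
  have "\<bar>q_value P R \<gamma> (V_star P R \<gamma>) i a - q_value P' R' \<gamma> (V_star P' R' \<gamma>) j a\<bar>
      \<le> d_iter P R P' R' \<gamma> (Suc n) i j + \<gamma> ^ Suc n * K" for a
  proof -
    have "\<bar>q_value P R \<gamma> (V_star P R \<gamma>) i a - q_value P' R' \<gamma> (V_star P' R' \<gamma>) j a\<bar>
        \<le> \<bar>R i a - R' j a\<bar> + \<gamma> * W1 (P i a) (P' j a) (d_iter P R P' R' \<gamma> n) + \<gamma> * (\<gamma> ^ n * K)"
      by (rule abs_q_value_diff_le_W1[OF assms(1-3) Suc.IH])
    moreover have "\<gamma> * (\<gamma> ^ n * K) = \<gamma> ^ Suc n * K" by simp
    ultimately show ?thesis using d_iter_Suc_ge[of R i a R' j \<gamma> P P' n] by linarith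
  qed
  then have "\<bar>Max (range (q_value P R \<gamma> (V_star P R \<gamma>) i)) - Max (range (q_value P' R' \<gamma> (V_star P' R' \<gamma>) j))\<bar>
      \<le> d_iter P R P' R' \<gamma> (Suc n) i j + \<gamma> ^ Suc n * K"
    by (rule abs_Max_range_diff_le)
  then show ?case using V_star_eq[OF assms(1,3,4), of R i] V_star_eq[OF assms(2,3,4), of R' j] by simp
qed

lemma abs_q_value_V_star_diff_le_d_bar:
  fixes P P' :: "'s::finite \<Rightarrow> 'a::finite \<Rightarrow> 's \<Rightarrow> real"
  assumes "stochastic P" "stochastic P'" "0 \<le> \<gamma>" "\<gamma> < 1"
  shows "\<bar>q_value P R \<gamma> (V_star P R \<gamma>) i a - q_value P' R' \<gamma> (V_star P' R' \<gamma>) j a\<bar> \<le> d_bar P R P' R' \<gamma> i j"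
proof (rule le_of_le_plus_power[OF assms(3,4)])
  define K where "K = (\<Sum>s\<in>UNIV. \<bar>V_star P R \<gamma> s\<bar>) + (\<Sum>s\<in>UNIV. \<bar>V_star P' R' \<gamma> s\<bar>)"
  have K: "\<bar>V_star P R \<gamma> i - V_star P' R' \<gamma> j\<bar> \<le> K" for i j
  proof -
    have "\<bar>V_star P R \<gamma> i\<bar> \<le> (\<Sum>s\<in>UNIV. \<bar>V_star P R \<gamma> s\<bar>)"
      and "\<bar>V_star P' R' \<gamma> j\<bar> \<le> (\<Sum>s\<in>UNIV. \<bar>V_star P' R' \<gamma> s\<bar>)"
      by (intro member_le_sum; simp)+
    then show ?thesis
      using abs_triangle_ineq4[of "V_star P R \<gamma> i" "V_star P' R' \<gamma> j"] unfolding K_def by linarith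
  qed
  fix n
  have "\<bar>q_value P R \<gamma> (V_star P R \<gamma>) i a - q_value P' R' \<gamma> (V_star P' R' \<gamma>) j a\<bar>
      \<le> \<bar>R i a - R' j a\<bar> + \<gamma> * W1 (P i a) (P' j a) (d_iter P R P' R' \<gamma> n) + \<gamma> * (\<gamma> ^ n * K)"
    by (rule abs_q_value_diff_le_W1[OF assms(1-3) abs_V_star_diff_le_d_iter[OF assms K]])
  also have "\<dots> \<le> d_iter P R P' R' \<gamma> (Suc n) i j + \<gamma> ^ n * (\<gamma> * K)"
    using d_iter_Suc_ge[of R i a R' j \<gamma> P P' n] mult.left_commute[of \<gamma> "\<gamma> ^ n" K] by linarith
  also have "\<dots> \<le> d_bar P R P' R' \<gamma> i j + \<gamma> ^ n * (\<gamma> * K)"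
    using d_iter_le_d_bar[OF assms, of R R' "Suc n" i j] by linarith
  finally show "\<bar>q_value P R \<gamma> (V_star P R \<gamma>) i a - q_value P' R' \<gamma> (V_star P' R' \<gamma>) j a\<bar>
      \<le> d_bar P R P' R' \<gamma> i j + \<gamma> ^ n * (\<gamma> * K)" .
qed

lemma abs_V_star_diff_le_d_bar:
  fixes P P' :: "'s::finite \<Rightarrow> 'a::finite \<Rightarrow> 's \<Rightarrow> real"
  assumes "stochastic P" "stochastic P'" "0 \<le> \<gamma>" "\<gamma> < 1"
  shows "\<bar>V_star P R \<gamma> i - V_star P' R' \<gamma> j\<bar> \<le> d_bar P R P' R' \<gamma> i j"
proof -
  have "\<bar>Max (range (q_value P R \<gamma> (V_star P R \<gamma>) i)) - Max (range (q_value P' R' \<gamma> (V_star P' R' \<gamma>) j))\<bar>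
      \<le> d_bar P R P' R' \<gamma> i j"
    by (rule abs_Max_range_diff_le) (rule abs_q_value_V_star_diff_le_d_bar[OF assms])
  then show ?thesis using V_star_eq[OF assms(1,3,4), of R i] V_star_eq[OF assms(2,3,4), of R' j] by simp
qed

lemma V_star_diff_V_pi_le:
  fixes P P' :: "'s::finite \<Rightarrow> 'a::finite \<Rightarrow> 's \<Rightarrow> real"
  assumes "stochastic P" "stochastic P'" "0 \<le> \<gamma>" "\<gamma> < 1"
  shows "V_star P R \<gamma> s - V_pi P R \<gamma> \<pi> s
    \<le> 2 * d_bar P R P' R' \<gamma> s s + gap (V_star P' R' \<gamma>) (V_pi P' R' \<gamma> \<pi>)
      + \<gamma> * gap (V_star P R \<gamma>) (V_pi P R \<gamma> \<pi>)"
proof -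
  have "\<bar>V_star P R \<gamma> s - V_star P' R' \<gamma> s\<bar> \<le> d_bar P R P' R' \<gamma> s s"
    by (rule abs_V_star_diff_le_d_bar[OF assms])
  moreover have "\<bar>q_value P R \<gamma> (V_star P R \<gamma>) s (\<pi> s) - q_value P' R' \<gamma> (V_star P' R' \<gamma>) s (\<pi> s)\<bar>
      \<le> d_bar P R P' R' \<gamma> s s"
    by (rule abs_q_value_V_star_diff_le_d_bar[OF assms])
  moreover have "V_star P' R' \<gamma> s - q_value P' R' \<gamma> (V_star P' R' \<gamma>) s (\<pi> s)
      \<le> gap (V_star P' R' \<gamma>) (V_pi P' R' \<gamma> \<pi>)"
    using V_pi_le_q_value_V_star[OF assms(2-4), of R' \<pi> s]
      diff_le_gap[of "V_star P' R' \<gamma>" s "V_pi P' R' \<gamma> \<pi>"] by linarith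
  moreover have "q_value P R \<gamma> (V_star P R \<gamma>) s (\<pi> s) - V_pi P R \<gamma> \<pi> s
      \<le> \<gamma> * gap (V_star P R \<gamma>) (V_pi P R \<gamma> \<pi>)"
    by (rule q_value_V_pi_diff_le_gap[OF assms(1,3,4)])
  ultimately show ?thesis by linarith
qed

theorem lemma4:
  fixes P P' :: "'s::finite \<Rightarrow> 'a::finite \<Rightarrow> 's \<Rightarrow> real"
    and R R' :: "'s \<Rightarrow> 'a \<Rightarrow> real"
    and \<gamma> :: real
    and \<pi> :: "'s \<Rightarrow> 'a"
  assumes "0 < \<gamma>" and "\<gamma> < 1"
    and "stochastic P" and "stochastic P'"
  shows "gap (V_star P R \<gamma>) (V_pi P R \<gamma> \<pi>)
    \<le> 2 / (1 - \<gamma>) * Max (range (\<lambda>s. d_bar P R P' R' \<gamma> s s))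
      + (1 + \<gamma>) / (1 - \<gamma>) * gap (V_star P' R' \<gamma>) (V_pi P' R' \<gamma> \<pi>)"
proof -
  have \<gamma>: "0 \<le> \<gamma>" "\<gamma> < 1" using assms(1,2) by simp_all
  define D where "D = Max (range (\<lambda>s. d_bar P R P' R' \<gamma> s s))"
  define G where "G = gap (V_star P' R' \<gamma>) (V_pi P' R' \<gamma> \<pi>)"
  define \<delta> where "\<delta> = gap (V_star P R \<gamma>) (V_pi P R \<gamma> \<pi>)"
  have D_ge: "d_bar P R P' R' \<gamma> s s \<le> D" for s by (simp add: D_def)
  have "V_star P R \<gamma> s - V_pi P R \<gamma> \<pi> s \<le> 2 * D + G + \<gamma> * \<delta>" for s
    using V_star_diff_V_pi_le[OF assms(3,4) \<gamma>, of R s \<pi> R'] D_ge[of s] unfolding G_def \<delta>_def by linarith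
  then have \<delta>_le: "\<delta> \<le> 2 * D + G + \<gamma> * \<delta>" by (simp add: \<delta>_def gap_le_iff)
  have "0 \<le> G"
    unfolding G_def by (rule gap_nonneg) (rule V_pi_le_V_star[OF assms(4) \<gamma>])
  then have "0 \<le> G * \<gamma>" using \<gamma> by simp
  then have "(1 - \<gamma>) * \<delta> \<le> 2 * D + (1 + \<gamma>) * G"
    using \<delta>_le by (simp add: algebra_simps)
  then have "\<delta> \<le> (2 * D + (1 + \<gamma>) * G) / (1 - \<gamma>)"
    by (subst pos_le_divide_eq) (use \<gamma> in \<open>simp_all add: mult.commute\<close>)
  also have "\<dots> = 2 / (1 - \<gamma>) * D + (1 + \<gamma>) / (1 - \<gamma>) * G"
    by (simp only: add_divide_distrib[of "2 * D"] times_divide_eq_left)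
  finally show ?thesis unfolding D_def G_def \<delta>_def .
qed

end
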